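(* Let $d\ge2$ and $g=\sum_{\mathbf k\in\mathbb Z^d}g_{\mathbf k}u^{\mathbf k}\in R_d$. Then $g\in (f^{(d)})+\mathscr I_d^3$ if and only if all of the following hold: (A) $\sum_{\mathbf k}g_{\mathbf k}=0$; (B) $\sum_{\mathbf k}g_{\mathbf k}k_i=0$ for $i=1,\dots,d$; (C) $\sum_{\mathbf k}g_{\mathbf k}k_ik_j=0$ for $1\le i\ne j\le d$; (D) $\sum_{\mathbf k}g_{\mathbf k}(k_i^2-k_j^2)=0$ for $1\le i\ne j\le d$, where $\mathbf k=(k_1,\dots,k_d)$.
   Context: $R_d=\mathbb Z[u_1^{\pm1},\dots,u_d^{\pm1}]$, $u^{\mathbf k}=u_1^{k_1}\cdots u_d^{k_d}$. $f^{(d)}=2d-\sum_{i=1}^d(u_i+u_i^{-1})$, $(f^{(d)})=f^{(d)}R_d$. $\mathscr I_d=\{h\in R_d:h(1,\dots,1)=0\}$, and $\mathscr I_d^3$ is its third power. *)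

theory Defs
  imports "HOL-Library.Poly_Mapping" "HOL-Analysis.Finite_Cartesian_Product"
begin

text \<open>Laurent polynomial ring R_d = Z[u_1^{+-1},...,u_d^{+-1}], realised as finitely
supported functions Z^d -> Z (exponent vectors indexed by a finite type 'n with
CARD('n) = d), with the convolution product of Poly_Mapping.\<close>

type_synonym 'n laurent = "(int ^ 'n) \<Rightarrow>\<^sub>0 int"

definition mono :: "int ^ 'n \<Rightarrow> 'n laurent" where
  "mono k = Poly_Mapping.single k 1"

definition var :: "('n::finite) \<Rightarrow> 'n laurent" where
  "var i = mono (\<chi> j. if j = i then 1 else 0)"

definition var_inv :: "('n::finite) \<Rightarrow> 'n laurent" where
  "var_inv i = mono (\<chi> j. if j = i then -1 else 0)"

definition fd :: "('n::finite) laurent" where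
  "fd = of_nat (2 * CARD('n)) - (\<Sum>i\<in>UNIV. var i + var_inv i)"

definition eval_ones :: "'n laurent \<Rightarrow> int" where
  "eval_ones h = (\<Sum>k\<in>Poly_Mapping.keys h. Poly_Mapping.lookup h k)"

definition aug_ideal :: "'n laurent set" where
  "aug_ideal = {h. eval_ones h = 0}"

inductive_set ideal_cube :: "'a::comm_ring_1 set \<Rightarrow> 'a set" for I where
  zero: "0 \<in> ideal_cube I"
| prod: "a \<in> I \<Longrightarrow> b \<in> I \<Longrightarrow> c \<in> I \<Longrightarrow> a * b * c \<in> ideal_cube I"
| add: "x \<in> ideal_cube I \<Longrightarrow> y \<in> ideal_cube I \<Longrightarrow> x + y \<in> ideal_cube I"
| mult: "x \<in> ideal_cube I \<Longrightarrow> r * x \<in> ideal_cube I"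

definition in_fd_plus_cube :: "('n::finite) laurent \<Rightarrow> bool" where
  "in_fd_plus_cube g \<longleftrightarrow> (\<exists>h q. q \<in> ideal_cube aug_ideal \<and> g = fd * h + q)"

end

theory Submission
  imports Defs
begin

(* For a weight w : Z^d -> Z, the "moment" of g = sum_k g_k u^k is sum_k g_k w(k).  The moments of
   order at most two (weights 1, k_i, k_i k_j) obey Leibniz rules under multiplication, because
   exponent vectors add.  Since I = kernel of the order-0 moment, every element of I^3 has all
   moments of order <= 2 equal to zero.  Conversely, writing x_i = u_i - 1, every element of R_d is
   congruent modulo I^3 to a quadratic Taylor polynomial c + sum a_i x_i + sum b_ij x_i x_j (the set
   of such elements contains 1, u_i, u_i^-1 and is closed under subtraction and multiplication), and
   such a polynomial is zero once its moments vanish.  Hence I^3 is exactly the set of elements with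
   vanishing moments of order <= 2.  Finally f has moments 0, 0 and -2 delta_ij, so g lies in
   (f) + I^3 iff its order-0 and order-1 moments vanish and its order-2 moment matrix is a scalar
   multiple 2c of the identity; evenness of the diagonal moments (when the order-1 moments vanish)
   turns this into conditions (A)-(D). *)

lemma sum_delta_conj:
  "(\<Sum>i\<in>(UNIV::'n::finite set). if l = i \<and> m = i then (c i :: 'a::comm_monoid_add) else 0) = (if l = m then c l else 0)"
proof (cases "l = m")
  case False
  then have "\<And>i. (if l = i \<and> m = i then c i else 0) = 0" by auto
  then show ?thesis using False by simp
qed simp

lemma sum_delta_row:
  "(\<Sum>j\<in>(UNIV::'n::finite set). if l = i \<and> m = j then (c j :: 'a::comm_monoid_add) else 0) = (if l = i then c m else 0)"
  by (cases "l = i") simp_all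

lemma sum_delta2:
  fixes b :: "'n::finite \<Rightarrow> 'n \<Rightarrow> 'a::comm_monoid_add"
  shows "(\<Sum>i\<in>UNIV. \<Sum>j\<in>UNIV. if l = i \<and> m = j then b i j else 0) = b l m"
  by (simp add: sum_delta_row)

(* Products of indicator values; used with "simp only" to avoid case splits on index equalities. *)
lemma mult_indicator: "(x :: int) * (if P then 1 else 0) = (if P then x else 0)"
  by simp

lemma indicator_mult:
  "(if P then (x :: int) else 0) * (if Q then y else 0) = (if P \<and> Q then x * y else 0)"
  by simp

definition moment :: "('a \<Rightarrow> int) \<Rightarrow> ('a \<Rightarrow>\<^sub>0 int) \<Rightarrow> int" where
  "moment w p = (\<Sum>k\<in>Poly_Mapping.keys p. Poly_Mapping.lookup p k * w k)"

lemma moment_superset: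
  assumes "finite S" "Poly_Mapping.keys p \<subseteq> S"
  shows "moment w p = (\<Sum>k\<in>S. Poly_Mapping.lookup p k * w k)"
  unfolding moment_def using assms
  by (intro sum.mono_neutral_left) (auto simp: in_keys_iff)

lemma moment_0 [simp]: "moment w 0 = 0"
  by (simp add: moment_def)

lemma moment_add [simp]: "moment w (p + q) = moment w p + moment w q"
proof -
  let ?S = "Poly_Mapping.keys p \<union> Poly_Mapping.keys q"
  have "moment w (p + q) = (\<Sum>k\<in>?S. Poly_Mapping.lookup (p + q) k * w k)"
    using keys_add[of p q] by (intro moment_superset) auto
  also have "\<dots> = (\<Sum>k\<in>?S. Poly_Mapping.lookup p k * w k) + (\<Sum>k\<in>?S. Poly_Mapping.lookup q k * w k)"
    by (simp add: lookup_add distrib_right sum.distrib)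
  also have "\<dots> = moment w p + moment w q"
    by (simp add: moment_superset[of ?S p] moment_superset[of ?S q])
  finally show ?thesis .
qed

lemma moment_uminus [simp]: "moment w (- p) = - moment w p"
  by (simp add: moment_def sum_negf)

lemma moment_diff [simp]: "moment w (p - q) = moment w p - moment w q"
  using moment_add[of w p "- q"] by simp

lemma moment_single [simp]: "moment w (Poly_Mapping.single k c) = c * w k"
  by (simp add: moment_def)

lemma moment_sum: "finite F \<Longrightarrow> moment w (sum f F) = (\<Sum>i\<in>F. moment w (f i))"
  by (induction F rule: finite_induct) auto

lemma moment_add_weight: "moment (\<lambda>k. w k + v k) p = moment w p + moment v p"
  by (simp add: moment_def distrib_left sum.distrib)

(* Constants are supported at the zero exponent. *)
lemma moment_of_int [simp]:
  "moment w (of_int c :: 'a::monoid_add \<Rightarrow>\<^sub>0 int) = c * w 0"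
  by (metis single_of_int of_int_eq_id id_apply moment_single)

lemma moment_of_nat [simp]:
  "moment w (of_nat n :: 'a::monoid_add \<Rightarrow>\<^sub>0 int) = int n * w 0"
  by (metis single_of_nat moment_single)

lemma moment_one [simp]: "moment w (1 :: 'a::monoid_add \<Rightarrow>\<^sub>0 int) = w 0"
  using moment_of_int[of w 1] by simp

lemma moment_of_int_mult [simp]:
  "moment w (of_int c * p :: 'a::monoid_add \<Rightarrow>\<^sub>0 int) = c * moment w p"
  using subset_UNIV[of "Poly_Mapping.keys p"]
proof (induction p rule: frag_induction)
  case (one x)
  have "(of_int c :: 'a \<Rightarrow>\<^sub>0 int) * frag_of x = Poly_Mapping.single x c"
    by (simp flip: single_of_int add: mult_single)
  then show ?case by simp
qed (simp_all add: right_diff_distrib)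

lemma bilinear_induct [case_names single diff_left diff_right]:
  fixes P :: "('a \<Rightarrow>\<^sub>0 int) \<Rightarrow> ('b \<Rightarrow>\<^sub>0 int) \<Rightarrow> bool"
  assumes single: "\<And>x y. P (frag_of x) (frag_of y)"
    and diff_left: "\<And>a b q. P a q \<Longrightarrow> P b q \<Longrightarrow> P (a - b) q"
    and diff_right: "\<And>p a b. P p a \<Longrightarrow> P p b \<Longrightarrow> P p (a - b)"
  shows "P p q"
proof -
  have single_left: "P (frag_of x) q" for x q
    using subset_UNIV[of "Poly_Mapping.keys q"]
  proof (induction q rule: frag_induction)
    case zero
    then show ?case by (metis diff_self diff_right single)
  qed (use single diff_right in auto)
  show ?thesis
    using subset_UNIV[of "Poly_Mapping.keys p"]
  proof (induction p rule: frag_induction)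
    case zero
    then show ?case by (metis diff_self diff_left single_left)
  qed (use single_left diff_left in auto)
qed

abbreviation moment0 :: "('a \<Rightarrow>\<^sub>0 int) \<Rightarrow> int" where
  "moment0 \<equiv> moment (\<lambda>k. 1)"

abbreviation moment1 :: "'n::finite \<Rightarrow> 'n laurent \<Rightarrow> int" where
  "moment1 i \<equiv> moment (\<lambda>k. k $ i)"

abbreviation moment2 :: "'n::finite \<Rightarrow> 'n \<Rightarrow> 'n laurent \<Rightarrow> int" where
  "moment2 i j \<equiv> moment (\<lambda>k. k $ i * k $ j)"

(* Leibniz rules: the exponents of a product of monomials add, so the low-order moments of a product
   are determined by the low-order moments of the factors. *)
lemma moment0_mult: "moment0 (p * q :: 'a::monoid_add \<Rightarrow>\<^sub>0 int) = moment0 p * moment0 q"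
  by (induction p q rule: bilinear_induct) (auto simp: mult_single left_diff_distrib right_diff_distrib)

lemma moment1_mult: "moment1 i (p * q) = moment1 i p * moment0 q + moment0 p * moment1 i q"
  by (induction p q rule: bilinear_induct)
    (auto simp: mult_single left_diff_distrib right_diff_distrib algebra_simps)

lemma moment2_mult:
  "moment2 i j (p * q) =
     moment2 i j p * moment0 q + moment1 i p * moment1 j q + moment1 j p * moment1 i q + moment0 p * moment2 i j q"
  by (induction p q rule: bilinear_induct)
    (auto simp: mult_single left_diff_distrib right_diff_distrib algebra_simps)

lemmas moment_mult = moment0_mult moment1_mult moment2_mult

lemma ideal_cube_uminus: "x \<in> ideal_cube I \<Longrightarrow> - x \<in> ideal_cube I"
  using ideal_cube.mult[of x I "-1"] by simp

lemma ideal_cube_diff: "x \<in> ideal_cube I \<Longrightarrow> y \<in> ideal_cube I \<Longrightarrow> x - y \<in> ideal_cube I"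
  using ideal_cube.add[of x I "- y"] ideal_cube_uminus[of y I] by simp

lemma ideal_cube_mult_right: "x \<in> ideal_cube I \<Longrightarrow> x * r \<in> ideal_cube I"
  using ideal_cube.mult[of x I r] by (simp add: mult.commute)

lemma ideal_cube_sum:
  "finite F \<Longrightarrow> (\<And>i. i \<in> F \<Longrightarrow> f i \<in> ideal_cube I) \<Longrightarrow> sum f F \<in> ideal_cube I"
  by (induction F rule: finite_induct) (auto intro: ideal_cube.intros)

abbreviation aug_cube :: "'n::finite laurent set" where
  "aug_cube \<equiv> ideal_cube aug_ideal"

lemma aug_ideal_iff: "p \<in> aug_ideal \<longleftrightarrow> moment0 p = 0"
  by (simp add: aug_ideal_def eval_ones_def moment_def)

definition moments_vanish :: "'n::finite laurent \<Rightarrow> bool" where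
  "moments_vanish q \<longleftrightarrow> moment0 q = 0 \<and> (\<forall>i. moment1 i q = 0) \<and> (\<forall>i j. moment2 i j q = 0)"

(* Easy half of the characterisation of I^3: by the Leibniz rules a product of three elements of I
   has vanishing moments of order <= 2, and this is preserved by sums and ring multiples. *)
lemma aug_cube_moments_vanish: "q \<in> aug_cube \<Longrightarrow> moments_vanish q"
  by (induction rule: ideal_cube.induct) (auto simp: moments_vanish_def aug_ideal_iff moment_mult)

definition unit_vec :: "'n::finite \<Rightarrow> int ^ 'n" where
  "unit_vec i = (\<chi> j. if j = i then 1 else 0)"

lemma unit_vec_nth [simp]: "unit_vec i $ j = (if j = i then 1 else 0)"
  by (simp add: unit_vec_def)

lemma var_eq: "var i = mono (unit_vec i)"
  by (simp add: var_def unit_vec_def)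

lemma var_inv_eq: "var_inv i = mono (- unit_vec i)"
proof -
  have "(\<chi> j. if j = i then -1 else 0) = - unit_vec i"
    by (simp add: vec_eq_iff)
  then show ?thesis by (simp add: var_inv_def)
qed

lemma moment_fd:
  "moment w (fd :: 'n::finite laurent) =
     (\<Sum>i\<in>UNIV. 2 * w 0 - w (unit_vec i) - w (- unit_vec i))"
  by (simp add: fd_def moment_sum var_eq var_inv_eq mono_def sum_subtractf sum.distrib del: of_nat_mult)

lemma moment0_fd: "moment0 (fd :: 'n::finite laurent) = 0"
  by (simp add: moment_fd)

lemma moment1_fd: "moment1 l (fd :: 'n::finite laurent) = 0"
  by (simp add: moment_fd)

lemma moment2_fd: "moment2 l m (fd :: 'n::finite laurent) = (if l = m then -2 else 0)"
proof -
  have "moment2 l m (fd :: 'n laurent) = (\<Sum>i\<in>UNIV. if l = i \<and> m = i then -2 else 0)"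
    unfolding moment_fd by (intro sum.cong) auto
  then show ?thesis by (simp add: sum_delta_conj)
qed

definition xvar :: "'n::finite \<Rightarrow> 'n laurent" where
  "xvar i = var i - 1"

definition taylor_lin :: "('n::finite \<Rightarrow> int) \<Rightarrow> 'n laurent" where
  "taylor_lin a = (\<Sum>i\<in>UNIV. of_int (a i) * xvar i)"

definition taylor_quad :: "('n::finite \<Rightarrow> 'n \<Rightarrow> int) \<Rightarrow> 'n laurent" where
  "taylor_quad b = (\<Sum>i\<in>UNIV. \<Sum>j\<in>UNIV. of_int (b i j) * (xvar i * xvar j))"

definition taylor :: "int \<Rightarrow> ('n::finite \<Rightarrow> int) \<Rightarrow> ('n \<Rightarrow> 'n \<Rightarrow> int) \<Rightarrow> 'n laurent" where
  "taylor c a b = of_int c + taylor_lin a + taylor_quad b"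

lemma moment_xvar: "moment w (xvar i) = w (unit_vec i) - w 0"
  by (simp add: xvar_def var_eq mono_def)

lemma moment0_xvar [simp]: "moment0 (xvar i) = 0"
  by (simp add: moment_xvar)

lemma moment1_xvar [simp]: "moment1 l (xvar i) = (if l = i then 1 else 0)"
  by (simp add: moment_xvar)

lemma moment2_xvar [simp]: "moment2 l m (xvar i) = (if l = i \<and> m = i then 1 else 0)"
  by (simp add: moment_xvar)

lemma moment2_xvar_xvar:
  "moment2 l m (xvar i * xvar j) = (if l = i \<and> m = j then 1 else 0) + (if m = i \<and> l = j then 1 else 0)"
  by (simp only: moment2_mult moment0_xvar moment1_xvar mult_zero_left mult_zero_right add_0 add_0_right
      indicator_mult mult_1)

lemma moment0_taylor_lin [simp]: "moment0 (taylor_lin a) = 0"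
  by (simp add: taylor_lin_def moment_sum moment0_mult)

lemma moment1_taylor_lin [simp]: "moment1 l (taylor_lin a) = a l"
  by (simp add: taylor_lin_def moment_sum moment0_mult moment1_mult if_distrib cong: if_cong)

lemma moment2_taylor_lin [simp]: "moment2 l m (taylor_lin a) = (if l = m then a l else 0)"
proof -
  have "moment2 l m (taylor_lin a) = (\<Sum>i\<in>UNIV. if l = i \<and> m = i then a i else 0)"
    unfolding taylor_lin_def by (simp add: moment_sum if_distrib cong: if_cong)
  then show ?thesis by (simp add: sum_delta_conj)
qed

lemma moment0_taylor_quad [simp]: "moment0 (taylor_quad b) = 0"
  by (simp add: taylor_quad_def moment_sum moment0_mult)

lemma moment1_taylor_quad [simp]: "moment1 l (taylor_quad b) = 0"
  by (simp add: taylor_quad_def moment_sum moment0_mult moment1_mult)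

lemma moment2_taylor_quad [simp]: "moment2 l m (taylor_quad b) = b l m + b m l"
proof -
  have "moment2 l m (of_int (b i j) * (xvar i * xvar j)) =
      (if l = i \<and> m = j then b i j else 0) + (if m = i \<and> l = j then b i j else 0)" for i j
    by (simp only: moment_of_int_mult moment2_xvar_xvar distrib_left mult_indicator)
  then have "moment2 l m (taylor_quad b) =
      (\<Sum>i\<in>UNIV. \<Sum>j\<in>UNIV. (if l = i \<and> m = j then b i j else 0) + (if m = i \<and> l = j then b i j else 0))"
    unfolding taylor_quad_def by (simp only: moment_sum[OF finite_class.finite_UNIV])
  also have "\<dots> = b l m + b m l"
    by (simp only: sum.distrib sum_delta2)
  finally show ?thesis .
qed

lemma moments_taylor:
  "moment0 (taylor c a b) = c"
  "moment1 l (taylor c a b) = a l"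
  "moment2 l m (taylor c a b) = (if l = m then a l else 0) + b l m + b m l"
  by (simp_all add: taylor_def)

lemma taylor_quad_symmetrize: "taylor_quad b + taylor_quad b = taylor_quad (\<lambda>i j. b i j + b j i)"
proof -
  have "taylor_quad (\<lambda>i j. b j i) = (\<Sum>j\<in>UNIV. \<Sum>i\<in>UNIV. of_int (b j i) * (xvar i * xvar j))"
    unfolding taylor_quad_def by (rule sum.swap)
  also have "\<dots> = taylor_quad b"
    unfolding taylor_quad_def by (simp add: mult.commute)
  finally have "taylor_quad (\<lambda>i j. b j i) = taylor_quad b" .
  moreover have "taylor_quad (\<lambda>i j. b i j + b j i) = taylor_quad b + taylor_quad (\<lambda>i j. b j i)"
    unfolding taylor_quad_def by (simp add: distrib_right sum.distrib)
  ultimately show ?thesis by simp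
qed

lemma double_eq_zero: "(p :: 'a \<Rightarrow>\<^sub>0 int) + p = 0 \<Longrightarrow> p = 0"
proof (rule poly_mapping_eqI)
  fix k assume "p + p = 0"
  then have "Poly_Mapping.lookup p k + Poly_Mapping.lookup p k = 0"
    by (metis lookup_add lookup_zero)
  then show "Poly_Mapping.lookup p k = Poly_Mapping.lookup 0 k" by simp
qed

lemma taylor_eq_zero:
  assumes "moments_vanish (taylor c a b)"
  shows "taylor c a b = 0"
proof -
  have c_zero: "c = 0" and a_zero: "\<And>l. a l = 0"
    using assms by (simp_all add: moments_vanish_def moments_taylor)
  have "b l m + b m l = 0" for l m
  proof -
    have "moment2 l m (taylor c a b) = 0"
      using assms by (simp add: moments_vanish_def)
    then show ?thesis by (simp add: moments_taylor a_zero cong: if_cong)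
  qed
  then have "taylor_quad (\<lambda>i j. b i j + b j i) = 0"
    by (simp add: taylor_quad_def)
  then have "taylor_quad b + taylor_quad b = 0"
    by (simp only: taylor_quad_symmetrize)
  then have "taylor_quad b = 0" by (rule double_eq_zero)
  moreover have "taylor_lin a = 0"
    by (simp add: taylor_lin_def a_zero)
  ultimately show ?thesis by (simp add: taylor_def c_zero)
qed

lemma xvar_aug [simp]: "xvar i \<in> aug_ideal"
  by (simp add: aug_ideal_iff)

lemma taylor_lin_aug [simp]: "taylor_lin a \<in> aug_ideal"
  by (simp add: aug_ideal_iff)

lemma taylor_quad_aug [simp]: "taylor_quad b \<in> aug_ideal"
  by (simp add: aug_ideal_iff)

lemma aug_mult_taylor_quad:
  assumes "y \<in> aug_ideal"
  shows "y * taylor_quad b \<in> aug_cube"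
proof -
  have "y * taylor_quad b = (\<Sum>i\<in>UNIV. \<Sum>j\<in>UNIV. of_int (b i j) * (y * xvar i * xvar j))"
    by (simp add: taylor_quad_def sum_distrib_left mult_ac)
  also have "\<dots> \<in> aug_cube"
    by (intro ideal_cube_sum ideal_cube.mult ideal_cube.prod assms xvar_aug) auto
  finally show ?thesis .
qed

lemma taylor_mult:
  "taylor c a b * taylor c' a' b' -
     taylor (c * c') (\<lambda>i. c * a' i + c' * a i) (\<lambda>i j. a i * a' j + c * b' i j + c' * b i j) \<in> aug_cube"
proof -
  have lin: "taylor_lin (\<lambda>i. c * a' i + c' * a i) = of_int c * taylor_lin a' + of_int c' * taylor_lin a"
    unfolding taylor_lin_def by (simp add: sum_distrib_left sum.distrib algebra_simps)
  have lin_lin: "taylor_lin a * taylor_lin a' = (\<Sum>i\<in>UNIV. \<Sum>j\<in>UNIV. of_int (a i * a' j) * (xvar i * xvar j))"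
    unfolding taylor_lin_def sum_product by (simp add: mult_ac)
  have quad: "taylor_quad (\<lambda>i j. a i * a' j + c * b' i j + c' * b i j) =
      taylor_lin a * taylor_lin a' + of_int c * taylor_quad b' + of_int c' * taylor_quad b"
    unfolding lin_lin taylor_quad_def by (simp add: sum_distrib_left sum.distrib algebra_simps)
  have "taylor c a b * taylor c' a' b' -
      taylor (c * c') (\<lambda>i. c * a' i + c' * a i) (\<lambda>i j. a i * a' j + c * b' i j + c' * b i j)
     = taylor_lin a * taylor_quad b' + taylor_lin a' * taylor_quad b + taylor_quad b * taylor_quad b'"
    unfolding taylor_def lin quad by (simp add: algebra_simps)
  also have "\<dots> \<in> aug_cube"
    by (intro ideal_cube.add aug_mult_taylor_quad taylor_lin_aug taylor_quad_aug)
  finally show ?thesis .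
qed

lemma taylor_diff:
  "taylor c a b - taylor c' a' b' = taylor (c - c') (\<lambda>i. a i - a' i) (\<lambda>i j. b i j - b' i j)"
  unfolding taylor_def taylor_lin_def taylor_quad_def by (simp add: sum_subtractf algebra_simps)

definition taylor_expandable :: "'n::finite laurent \<Rightarrow> bool" where
  "taylor_expandable p \<longleftrightarrow> (\<exists>c a b. p - taylor c a b \<in> aug_cube)"

lemma taylor_expandable_diff:
  assumes "taylor_expandable p" "taylor_expandable q"
  shows "taylor_expandable (p - q)"
proof -
  obtain c a b c' a' b' where p: "p - taylor c a b \<in> aug_cube" and q: "q - taylor c' a' b' \<in> aug_cube"
    using assms unfolding taylor_expandable_def by blast
  have "p - q - taylor (c - c') (\<lambda>i. a i - a' i) (\<lambda>i j. b i j - b' i j) =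
      (p - taylor c a b) - (q - taylor c' a' b')"
    by (simp add: taylor_diff[symmetric])
  also have "\<dots> \<in> aug_cube" using p q by (rule ideal_cube_diff)
  finally show ?thesis unfolding taylor_expandable_def by blast
qed

lemma taylor_expandable_mult:
  assumes "taylor_expandable p" "taylor_expandable q"
  shows "taylor_expandable (p * q)"
proof -
  obtain c a b c' a' b' where p: "p - taylor c a b \<in> aug_cube" and q: "q - taylor c' a' b' \<in> aug_cube"
    using assms unfolding taylor_expandable_def by blast
  let ?t = "taylor (c * c') (\<lambda>i. c * a' i + c' * a i) (\<lambda>i j. a i * a' j + c * b' i j + c' * b i j)"
  have "p * q - ?t = p * (q - taylor c' a' b') + (p - taylor c a b) * taylor c' a' b' +
      (taylor c a b * taylor c' a' b' - ?t)"
    by (simp add: algebra_simps)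
  also have "\<dots> \<in> aug_cube"
    by (intro ideal_cube.add ideal_cube.mult ideal_cube_mult_right p q taylor_mult)
  finally show ?thesis unfolding taylor_expandable_def by blast
qed

lemma taylor_expandable_taylor: "taylor_expandable (taylor c a b)"
  unfolding taylor_expandable_def by (metis diff_self ideal_cube.zero)

lemma taylor_expandable_one: "taylor_expandable 1"
proof -
  have "taylor 1 (\<lambda>i. 0) (\<lambda>i j. 0) = (1 :: 'n::finite laurent)"
    by (simp add: taylor_def taylor_lin_def taylor_quad_def)
  then show ?thesis using taylor_expandable_taylor by metis
qed

(* u_i = 1 + x_i. *)
lemma taylor_expandable_var: "taylor_expandable (var i)"
proof -
  have "taylor_lin (\<lambda>j. if j = i then 1 else 0) = (\<Sum>j\<in>UNIV. if j = i then xvar j else 0)"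
    unfolding taylor_lin_def by (intro sum.cong) auto
  then have "taylor_lin (\<lambda>j. if j = i then 1 else 0) = xvar i"
    by simp
  then have "taylor 1 (\<lambda>j. if j = i then 1 else 0) (\<lambda>j l. 0) = var i"
    by (simp add: taylor_def taylor_quad_def xvar_def)
  then show ?thesis using taylor_expandable_taylor by metis
qed

(* u_i^-1 = 1 - x_i + x_i^2 - u_i^-1 x_i^3, and the last term lies in I^3. *)
lemma taylor_expandable_var_inv: "taylor_expandable (var_inv i)"
proof -
  have "taylor_lin (\<lambda>j. if j = i then -1 else 0) = (\<Sum>j\<in>UNIV. if j = i then - xvar j else 0)"
    unfolding taylor_lin_def by (intro sum.cong) auto
  then have lin: "taylor_lin (\<lambda>j. if j = i then -1 else 0) = - xvar i"
    by simp
  have "taylor_quad (\<lambda>j l. if j = i \<and> l = i then 1 else 0) =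
      (\<Sum>j\<in>UNIV. \<Sum>l\<in>UNIV. if i = j \<and> i = l then xvar j * xvar l else 0)"
    unfolding taylor_quad_def by (auto intro!: sum.cong)
  also have "\<dots> = xvar i * xvar i"
    by (rule sum_delta2)
  finally have quad: "taylor_quad (\<lambda>j l. if j = i \<and> l = i then 1 else 0) = xvar i * xvar i" .
  have inverse: "var_inv i * (xvar i + 1) = 1"
    by (simp add: xvar_def var_eq var_inv_eq mono_def mult_single)
  have "var_inv i - taylor 1 (\<lambda>j. if j = i then -1 else 0) (\<lambda>j l. if j = i \<and> l = i then 1 else 0)
      = (- var_inv i) * (xvar i * xvar i * xvar i) + (var_inv i * (xvar i + 1) - 1) * (1 - xvar i + xvar i * xvar i)"
    unfolding taylor_def lin quad by (simp add: algebra_simps)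
  also have "\<dots> = (- var_inv i) * (xvar i * xvar i * xvar i)"
    by (simp add: inverse)
  also have "\<dots> \<in> aug_cube"
    by (intro ideal_cube.mult ideal_cube.prod xvar_aug)
  finally show ?thesis unfolding taylor_expandable_def by blast
qed

lemma taylor_expandable_axis_mono: "taylor_expandable (mono (m *s unit_vec i))"
proof (induction m rule: int_induct[where k = 0])
  case base
  show ?case using taylor_expandable_one by (simp add: mono_def)
next
  case (step1 m)
  have "mono ((m + 1) *s unit_vec i) = mono (m *s unit_vec i) * var i"
    by (simp add: mono_def var_eq mult_single vector_sadd_rdistrib)
  then show ?case using step1 taylor_expandable_mult taylor_expandable_var by metis
next
  case (step2 m)
  have "(m - 1) *s unit_vec i = m *s unit_vec i + - unit_vec i"
    by (simp add: vec_eq_iff algebra_simps)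
  then have "mono ((m - 1) *s unit_vec i) = mono (m *s unit_vec i) * var_inv i"
    by (simp add: mono_def var_inv_eq mult_single)
  then show ?case using step2 taylor_expandable_mult taylor_expandable_var_inv by metis
qed

lemma prod_mono: "finite F \<Longrightarrow> (\<Prod>i\<in>F. mono (k i)) = mono (\<Sum>i\<in>F. k i)"
  by (induction F rule: finite_induct) (auto simp: mono_def mult_single)

lemma taylor_expandable_mono: "taylor_expandable (mono k)"
proof -
  have "k = (\<Sum>i\<in>UNIV. k $ i *s unit_vec i)"
    by (simp add: vec_eq_iff mult_indicator)
  then have "mono k = (\<Prod>i\<in>UNIV. mono (k $ i *s unit_vec i))"
    by (simp add: prod_mono)
  also have "taylor_expandable \<dots>"
    by (induction rule: finite_induct[OF finite_class.finite_UNIV])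
      (simp_all add: taylor_expandable_one taylor_expandable_mult taylor_expandable_axis_mono)
  finally show ?thesis .
qed

lemma taylor_expandable_all: "taylor_expandable p"
  using subset_UNIV[of "Poly_Mapping.keys p"]
proof (induction p rule: frag_induction)
  case zero
  then show ?case using taylor_expandable_diff[OF taylor_expandable_one taylor_expandable_one] by simp
next
  case (one x)
  then show ?case using taylor_expandable_mono[of x] by (simp add: mono_def)
next
  case (diff a b)
  then show ?case by (rule taylor_expandable_diff)
qed

theorem aug_cube_iff_moments_vanish: "q \<in> aug_cube \<longleftrightarrow> moments_vanish q"
proof
  assume "moments_vanish q"
  obtain c a b where rest: "q - taylor c a b \<in> aug_cube"
    using taylor_expandable_all[of q] unfolding taylor_expandable_def by blast
  have "moments_vanish (q - taylor c a b)"
    using rest by (rule aug_cube_moments_vanish)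
  with \<open>moments_vanish q\<close> have "moments_vanish (taylor c a b)"
    by (simp add: moments_vanish_def)
  then have "taylor c a b = 0" by (rule taylor_eq_zero)
  then show "q \<in> aug_cube" using rest by simp
qed (rule aug_cube_moments_vanish)

lemma moments_vanish_fd_remainder:
  "moments_vanish (g - fd * h) \<longleftrightarrow>
     moment0 g = 0 \<and> (\<forall>i. moment1 i g = 0) \<and>
     (\<forall>i j. moment2 i j g = (if i = j then -2 * moment0 h else 0))"
proof -
  have "moment0 (g - fd * h) = moment0 g" "moment1 i (g - fd * h) = moment1 i g"
    "moment2 i j (g - fd * h) = moment2 i j g - (if i = j then -2 * moment0 h else 0)" for i j
    by (simp_all add: moment_mult moment0_fd moment1_fd moment2_fd)
  then show ?thesis
    unfolding moments_vanish_def by simp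
qed

(* Membership in (f) + I^3 in terms of moments: the order-2 moment matrix must be a multiple of 2 times
   the identity; the constant h = -c then realises the decomposition. *)
lemma in_fd_plus_cube_iff:
  fixes g :: "'n::finite laurent"
  shows "in_fd_plus_cube g \<longleftrightarrow>
     moment0 g = 0 \<and> (\<forall>i. moment1 i g = 0) \<and>
     (\<exists>c. \<forall>i j. moment2 i j g = (if i = j then 2 * c else 0))"
proof
  assume "in_fd_plus_cube g"
  then obtain h q where "q \<in> aug_cube" and "g = fd * h + q"
    unfolding in_fd_plus_cube_def by blast
  then have "g - fd * h \<in> aug_cube"
    by simp
  then have "moments_vanish (g - fd * h)"
    by (simp add: aug_cube_iff_moments_vanish)
  then show "moment0 g = 0 \<and> (\<forall>i. moment1 i g = 0) \<and>
      (\<exists>c. \<forall>i j. moment2 i j g = (if i = j then 2 * c else 0))"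
    unfolding moments_vanish_fd_remainder by (intro conjI exI[of _ "- moment0 h"]) auto
next
  assume "moment0 g = 0 \<and> (\<forall>i. moment1 i g = 0) \<and>
      (\<exists>c. \<forall>i j. moment2 i j g = (if i = j then 2 * c else 0))"
  then obtain c where moments: "moment0 g = 0" "\<forall>i. moment1 i g = 0"
      "\<forall>i j. moment2 i j g = (if i = j then 2 * c else 0)"
    by blast
  let ?h = "of_int (- c) :: 'n laurent"
  have "moments_vanish (g - fd * ?h)"
    unfolding moments_vanish_fd_remainder using moments by simp
  then have "g - fd * ?h \<in> aug_cube"
    by (simp add: aug_cube_iff_moments_vanish)
  then show "in_fd_plus_cube g"
    unfolding in_fd_plus_cube_def by (intro exI[of _ ?h] exI[of _ "g - fd * ?h"]) simp
qed

(* When the order-1 moment in direction i vanishes, the diagonal order-2 moment is even, since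
   k_i^2 = k_i (k_i - 1) + k_i. *)
lemma even_moment2_diag:
  fixes g :: "'n::finite laurent"
  assumes "moment1 i g = 0"
  shows "even (moment2 i i g)"
proof -
  have "(\<lambda>k :: int ^ 'n. k $ i * k $ i) = (\<lambda>k. k $ i * (k $ i - 1) + k $ i)"
    by (simp add: fun_eq_iff algebra_simps)
  then have "moment2 i i g = moment (\<lambda>k. k $ i * (k $ i - 1)) g + moment1 i g"
    by (simp only: moment_add_weight)
  moreover have "even (moment (\<lambda>k. k $ i * (k $ i - 1)) g)"
    unfolding moment_def by (intro dvd_sum) simp
  ultimately show ?thesis using assms by simp
qed

lemma diagonal_moment2_iff:
  fixes g :: "'n::finite laurent"
  assumes "\<forall>i. moment1 i g = 0"
  shows "(\<exists>c. \<forall>i j. moment2 i j g = (if i = j then 2 * c else 0)) \<longleftrightarrow>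
    (\<forall>i j. i \<noteq> j \<longrightarrow> moment2 i j g = 0) \<and> (\<forall>i j. i \<noteq> j \<longrightarrow> moment2 i i g - moment2 j j g = 0)"
proof
  assume off_diag: "(\<forall>i j. i \<noteq> j \<longrightarrow> moment2 i j g = 0) \<and>
    (\<forall>i j. i \<noteq> j \<longrightarrow> moment2 i i g - moment2 j j g = 0)"
  fix i\<^sub>0 :: 'n
  obtain c where c: "moment2 i\<^sub>0 i\<^sub>0 g = 2 * c"
    using even_moment2_diag assms by blast
  have "moment2 i i g = 2 * c" for i
    using off_diag c by (cases "i = i\<^sub>0") auto
  then show "\<exists>c. \<forall>i j. moment2 i j g = (if i = j then 2 * c else 0)"
    using off_diag by auto
qed auto

lemma sums_as_moments:
  "(\<Sum>k\<in>Poly_Mapping.keys g. Poly_Mapping.lookup g k) = moment0 g"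
  "(\<Sum>k\<in>Poly_Mapping.keys g. Poly_Mapping.lookup g k * k $ i) = moment1 i g"
  "(\<Sum>k\<in>Poly_Mapping.keys g. Poly_Mapping.lookup g k * (k $ i * k $ j)) = moment2 i j g"
  "(\<Sum>k\<in>Poly_Mapping.keys g. Poly_Mapping.lookup g k * ((k $ i)^2 - (k $ j)^2)) =
     moment2 i i g - moment2 j j g"
  by (simp_all add: moment_def power2_eq_square right_diff_distrib sum_subtractf)

theorem lemma2p5:
  fixes g :: "('n::finite) laurent"
  assumes "CARD('n) \<ge> 2"
  shows "in_fd_plus_cube g \<longleftrightarrow>
    (\<Sum>k\<in>Poly_Mapping.keys g. Poly_Mapping.lookup g k) = 0 \<and>
    (\<forall>i. (\<Sum>k\<in>Poly_Mapping.keys g. Poly_Mapping.lookup g k * k $ i) = 0) \<and>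
    (\<forall>i j. i \<noteq> j \<longrightarrow> (\<Sum>k\<in>Poly_Mapping.keys g. Poly_Mapping.lookup g k * (k $ i * k $ j)) = 0) \<and>
    (\<forall>i j. i \<noteq> j \<longrightarrow> (\<Sum>k\<in>Poly_Mapping.keys g. Poly_Mapping.lookup g k * ((k $ i)^2 - (k $ j)^2)) = 0)"
  unfolding sums_as_moments in_fd_plus_cube_iff
  using diagonal_moment2_iff[of g] by (intro iffI; elim conjE; intro conjI) simp_all

end
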